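(* Let $\Delta>\delta\geq 0$ be integers and let $\delta^*$ be a maximizer of $\frac{\Delta(\Delta-i)i}{\Delta+i}$ over $i\in\{\delta,\delta+1,\ldots,\Delta\}$. Let $G$ be a graph with $n$ vertices, maximum degree at most $\Delta$, and minimum degree at least $\delta$. Then $$irr(G)\leq \frac{\Delta(\Delta-\delta^* )\delta^*}{\Delta+\delta^*}\,n.$$
   Context: All graphs are finite, simple and undirected. For a graph $G$ with edge set $E(G)$ and vertex degrees $d_G(u)$, the irregularity (in the sense of Albertson) is $irr(G)=\sum_{uv\in E(G)}|d_G(u)-d_G(v)|$. *)

theory Defs
  imports Complex_Main
begin

definition simple_graph :: "'a set \<Rightarrow> ('a \<Rightarrow> 'a \<Rightarrow> bool) \<Rightarrow> bool" where
  "simple_graph V E \<longleftrightarrow> finite V \<and> (\<forall>u v. E u v \<longrightarrow> E v u)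
     \<and> (\<forall>u. \<not> E u u) \<and> (\<forall>u v. E u v \<longrightarrow> u \<in> V \<and> v \<in> V)"

definition degree :: "'a set \<Rightarrow> ('a \<Rightarrow> 'a \<Rightarrow> bool) \<Rightarrow> 'a \<Rightarrow> nat" where
  "degree V E u = card {v \<in> V. E u v}"

definition edges :: "'a set \<Rightarrow> ('a \<Rightarrow> 'a \<Rightarrow> bool) \<Rightarrow> 'a set set" where
  "edges V E = {{u, v} | u v. u \<in> V \<and> v \<in> V \<and> E u v}"

text \<open>Albertson irregularity: sum over edges uv of |d(u) - d(v)|. For an edge e = {u,v},
  |d(u) - d(v)| = max of d on e minus min of d on e.\<close>
definition irr :: "'a set \<Rightarrow> ('a \<Rightarrow> 'a \<Rightarrow> bool) \<Rightarrow> real" where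
  "irr V E = (\<Sum>e\<in>edges V E. real (Max (degree V E ` e)) - real (Min (degree V E ` e)))"

definition irr_bound_fun :: "nat \<Rightarrow> nat \<Rightarrow> real" where
  "irr_bound_fun \<Delta> i = real \<Delta> * (real \<Delta> - real i) * real i / (real \<Delta> + real i)"

end

theory Submission
  imports Defs
begin

text \<open>Split each summand of the irregularity as
  \<open>|d(u) - d(v)| = |d(u) - d(v)| d(v)/(d(u)+d(v)) + |d(u) - d(v)| d(u)/(d(u)+d(v))\<close>
  and charge the first part to \<open>u\<close>, the second to \<open>v\<close>. Vertex \<open>u\<close> is charged
  \<open>d(u)\<close> times, each time at most \<open>f(min(d(u), d(v)))/d(u)\<close> with
  \<open>f(i) = \<Delta>(\<Delta> - i) i/(\<Delta> + i)\<close>, because \<open>b(b - a)/(a + b)\<close> increases in \<open>b\<close>.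
  Hence every vertex carries a total charge of at most \<open>f(\<delta>*)\<close>.\<close>

lemma diff_mult_div_add_mono:
  fixes a b c :: "'a :: linordered_field"
  assumes "0 \<le> a" "a \<le> b" "b \<le> c" "0 < a + b"
  shows "(b - a) * b / (a + b) \<le> (c - a) * c / (a + c)"
proof -
  have "(c - a) * c * (a + b) - (b - a) * b * (a + c) = (c - b) * ((a + b) * c + a * (b - a))"
    by (simp add: algebra_simps)
  moreover have "0 \<le> (c - b) * ((a + b) * c + a * (b - a))"
    using assms by (auto intro!: mult_nonneg_nonneg add_nonneg_nonneg)
  ultimately have "(b - a) * b * (a + c) \<le> (c - a) * c * (a + b)"
    by (simp add: algebra_simps)
  moreover have "0 < a + c" using assms by linarith
  ultimately show ?thesis using assms by (simp add: divide_simps mult.commute)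
qed

lemma mult_abs_diff_div_le_irr_bound_fun:
  assumes "x \<le> \<Delta>" "y \<le> \<Delta>"
  shows "real x * real y * \<bar>real x - real y\<bar> / (real x + real y) \<le> irr_bound_fun \<Delta> (min x y)"
proof -
  define a b where "a = real (min x y)" and "b = real (max x y)"
  have ab: "0 \<le> a" "a \<le> b" "b \<le> real \<Delta>" using assms by (auto simp: a_def b_def)
  have lhs: "real x * real y * \<bar>real x - real y\<bar> / (real x + real y) = a * ((b - a) * b / (a + b))"
    by (cases "x \<le> y") (auto simp: a_def b_def algebra_simps)
  show ?thesis
  proof (cases "a + b = 0")
    case True
    then have "x = 0" "y = 0" using ab by (auto simp: a_def b_def)
    then show ?thesis by (simp add: irr_bound_fun_def)
  next
    case False
    have "(b - a) * b / (a + b) \<le> (real \<Delta> - a) * real \<Delta> / (a + real \<Delta>)"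
      using ab False by (intro diff_mult_div_add_mono) auto
    then have "a * ((b - a) * b / (a + b)) \<le> a * ((real \<Delta> - a) * real \<Delta> / (a + real \<Delta>))"
      using ab by (intro mult_left_mono) auto
    also have "\<dots> = irr_bound_fun \<Delta> (min x y)"
      by (simp add: irr_bound_fun_def a_def mult_ac add_ac)
    finally show ?thesis by (simp only: lhs)
  qed
qed

definition irr_share :: "nat \<Rightarrow> nat \<Rightarrow> real" where
  "irr_share x y = \<bar>real x - real y\<bar> * real y / (real x + real y)"

lemma irr_share_add_swap: "irr_share x y + irr_share y x = \<bar>real x - real y\<bar>"
proof (cases "x = y")
  case False
  then have "real x + real y \<noteq> 0" by linarith
  then have "(real x + real y) * \<bar>real x - real y\<bar> / (real x + real y) = \<bar>real x - real y\<bar>"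
    by simp
  then show ?thesis
    unfolding irr_share_def
    by (simp add: abs_minus_commute add_divide_distrib[symmetric] algebra_simps)
qed (simp add: irr_share_def)

lemma mult_irr_share_le:
  assumes "x \<in> {\<delta>..\<Delta>}" "y \<in> {\<delta>..\<Delta>}"
    and max: "\<forall>i \<in> {\<delta>..\<Delta>}. irr_bound_fun \<Delta> i \<le> M"
  shows "real x * irr_share x y \<le> M"
proof -
  have "real x * irr_share x y = real x * real y * \<bar>real x - real y\<bar> / (real x + real y)"
    by (simp add: irr_share_def)
  also have "\<dots> \<le> irr_bound_fun \<Delta> (min x y)"
    using assms by (intro mult_abs_diff_div_le_irr_bound_fun) auto
  also have "\<dots> \<le> M"
    using assms by (intro max[rule_format]) (auto simp: min_def)
  finally show ?thesis .
qed

lemma sum_edges_eq_sum_neighbours: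
  fixes F :: "'a set \<Rightarrow> 'b :: comm_monoid_add"
  assumes G: "simple_graph V E"
    and split: "\<And>u v. E u v \<Longrightarrow> F {u, v} = g u v + g v u"
  shows "(\<Sum>e\<in>edges V E. F e) = (\<Sum>u\<in>V. \<Sum>v\<in>{v \<in> V. E u v}. g u v)"
proof -
  define A where "A = Sigma V (\<lambda>u. {v \<in> V. E u v})"
  have fin: "finite V" and sym: "\<And>u v. E u v \<Longrightarrow> E v u" and loopless: "\<And>u. \<not> E u u"
    and inV: "\<And>u v. E u v \<Longrightarrow> u \<in> V \<and> v \<in> V"
    using G unfolding simple_graph_def by auto
  have "finite A" using fin by (simp add: A_def)
  have edges_eq: "edges V E = (\<lambda>(u, v). {u, v}) ` A"
    unfolding edges_def A_def by auto
  have fibre: "{p \<in> A. (\<lambda>(u, v). {u, v}) p = {u, v}} = {(u, v), (v, u)}" if "E u v" for u v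
    using that sym inV unfolding A_def by (auto simp: doubleton_eq_iff)
  have "(\<Sum>(u, v)\<in>A. g u v)
      = (\<Sum>e\<in>edges V E. \<Sum>p\<in>{p \<in> A. (\<lambda>(u, v). {u, v}) p = e}. case p of (u, v) \<Rightarrow> g u v)"
    unfolding edges_eq using \<open>finite A\<close> by (rule sum.image_gen)
  also have "\<dots> = (\<Sum>e\<in>edges V E. F e)"
  proof (rule sum.cong[OF refl])
    fix e assume "e \<in> edges V E"
    then obtain u v where "E u v" "e = {u, v}" unfolding edges_def by auto
    moreover have "(u, v) \<noteq> (v, u)" using \<open>E u v\<close> loopless by auto
    ultimately show "(\<Sum>p\<in>{p \<in> A. (\<lambda>(u, v). {u, v}) p = e}. case p of (u, v) \<Rightarrow> g u v) = F e"
      by (simp add: fibre split)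
  qed
  finally show ?thesis
    unfolding A_def using fin by (simp add: sum.Sigma)
qed

lemma irr_eq_sum_irr_share:
  assumes "simple_graph V E"
  shows "irr V E = (\<Sum>u\<in>V. \<Sum>v\<in>{v \<in> V. E u v}. irr_share (degree V E u) (degree V E v))"
  unfolding irr_def
proof (rule sum_edges_eq_sum_neighbours[OF assms])
  fix u v
  show "real (Max (degree V E ` {u, v})) - real (Min (degree V E ` {u, v}))
      = irr_share (degree V E u) (degree V E v) + irr_share (degree V E v) (degree V E u)"
    by (cases "degree V E u \<le> degree V E v") (auto simp: irr_share_add_swap max_def min_def)
qed

lemma sum_irr_share_le:
  assumes "simple_graph V E" "u \<in> V"
    and degrees: "\<forall>v \<in> V. degree V E v \<in> {\<delta>..\<Delta>}"
    and max: "\<forall>i \<in> {\<delta>..\<Delta>}. irr_bound_fun \<Delta> i \<le> M" and "0 \<le> M"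
  shows "(\<Sum>v\<in>{v \<in> V. E u v}. irr_share (degree V E u) (degree V E v)) \<le> M"
proof (cases "degree V E u = 0")
  case True
  then have no_neighbours: "{v \<in> V. E u v} = {}"
    using assms(1) by (auto simp: degree_def simple_graph_def)
  show ?thesis using \<open>0 \<le> M\<close> by (simp only: no_neighbours sum.empty)
next
  case False
  have "(\<Sum>v\<in>{v \<in> V. E u v}. irr_share (degree V E u) (degree V E v))
      \<le> of_nat (card {v \<in> V. E u v}) * (M / real (degree V E u))"
  proof (rule sum_bounded_above)
    fix v assume "v \<in> {v \<in> V. E u v}"
    then have "real (degree V E u) * irr_share (degree V E u) (degree V E v) \<le> M"
      using assms by (intro mult_irr_share_le[OF _ _ max]) auto
    then show "irr_share (degree V E u) (degree V E v) \<le> M / real (degree V E u)"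
      using False by (simp add: field_simps mult.commute)
  qed
  also have "\<dots> = M" using False by (simp add: degree_def)
  finally show ?thesis .
qed

theorem proposition1:
  fixes V :: "'a set" and E :: "'a \<Rightarrow> 'a \<Rightarrow> bool" and \<Delta> \<delta> \<delta>s :: nat
  assumes "\<delta> < \<Delta>"
    and "\<delta>s \<in> {\<delta>..\<Delta>}"
    and "\<forall>i \<in> {\<delta>..\<Delta>}. irr_bound_fun \<Delta> i \<le> irr_bound_fun \<Delta> \<delta>s"
    and "simple_graph V E"
    and "\<forall>v \<in> V. degree V E v \<le> \<Delta>"
    and "\<forall>v \<in> V. \<delta> \<le> degree V E v"
  shows "irr V E \<le> irr_bound_fun \<Delta> \<delta>s * real (card V)"
proof -
  have "0 \<le> irr_bound_fun \<Delta> \<delta>s"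
    using assms(2) by (auto simp: irr_bound_fun_def)
  moreover have "\<forall>v \<in> V. degree V E v \<in> {\<delta>..\<Delta>}"
    using assms(5,6) by auto
  ultimately have "irr V E \<le> (\<Sum>u\<in>V. irr_bound_fun \<Delta> \<delta>s)"
    unfolding irr_eq_sum_irr_share[OF assms(4)]
    by (intro sum_mono sum_irr_share_le[OF assms(4) _ _ assms(3)]) auto
  then show ?thesis by (simp add: mult.commute)
qed

end
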